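(* Let $G$ be a finite group, $X=\{x_1,\dots,x_n\}$ with $n\ge2$, and fix a function $X\to G$ whose image generates $G$. Let $(\mathcal X_l)_{l\ge1}$ be a non-backtracking random walk on $(G,X)$ and $(\overline{\mathcal X}_l)$ its summed process. If $(\mathcal X_l)$ is aperiodic, then $\overline{\mathcal X}_l$ converges in distribution, as $l\to\infty$, to the uniform distribution on $G$. Otherwise there exists a subgroup $H\le G$ of index $2$ with $x_i\notin H$ for all $i$ such that $\overline{\mathcal X}_{2l}$ converges in distribution to the uniform distribution on $H$ and $\overline{\mathcal X}_{2l+1}$ converges in distribution to the uniform distribution on $G\setminus H$.
   Context: Let $G$ be a group, $X=\{x_1,\dots,x_n\}$ a set with $n\ge 2$, and fix a function $X\to G$; we identify each $x_i$ with its image in $G$. Let $\Omega=G\times\{\pm1,\pm2,\dots,\pm n\}$, with elements written $(g,\epsilon i)$, $g\in G$, $\epsilon=\pm1$, $i\in\{1,\dots,n\}$. A non-backtracking random walk on $(G,X)$ is a Markov chain $(\mathcal X_l)_{l\ge1}$ on $\Omega$ with transition probabilities $\mathbb P(\mathcal X_{l+1}=(g,\epsilon i)\mid \mathcal X_l=(h,\epsilon' j))=\alpha_{\epsilon' j,\epsilon i}$ if $g=hx_i^{\epsilon}$ and $\epsilon i\neq -\epsilon' j$, and $=0$ otherwise, where the $\alpha_{\epsilon' j,\epsilon i}$ are positive constants with $\sum_{\epsilon i\neq-\epsilon' j}\alpha_{\epsilon' j,\epsilon i}=1$ for each $\epsilon' j$; and with initial distribution $\mathbb P(\mathcal X_1=(g,\epsilon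 i))=\beta_{\epsilon i}$ if $g=x_i^{\epsilon}$ and $0$ otherwise, for positive constants $\beta_{\epsilon i}$ summing to $1$. Irreducibility and period refer to the Markov chain on the full state space $\Omega$. The summed process $\overline{\mathcal X}_l$ is the image of $\mathcal X_l$ under the projection $\Omega\to G$, i.e. $\mathbb P(\overline{\mathcal X}_l=g)=\sum_{\epsilon i}\mathbb P(\mathcal X_l=(g,\epsilon i))$. *)

theory Defs
  imports Complex_Main "HOL-Algebra.Algebra"
begin

text \<open>Signed indices: the set {+-1,...,+-n} is represented by nonzero integers e with |e| <= n.
  The element x_i^eps is nbw_gen G x e.\<close>

definition sidx :: "nat \<Rightarrow> int set" where
  "sidx n = {e. e \<noteq> 0 \<and> \<bar>e\<bar> \<le> int n}"

definition nbw_gen :: "('a, 'b) monoid_scheme \<Rightarrow> (nat \<Rightarrow> 'a) \<Rightarrow> int \<Rightarrow> 'a" where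
  "nbw_gen G x e = (if e > 0 then x (nat e) else inv\<^bsub>G\<^esub> (x (nat (- e))))"

definition nbw_states :: "('a, 'b) monoid_scheme \<Rightarrow> nat \<Rightarrow> ('a \<times> int) set" where
  "nbw_states G n = carrier G \<times> sidx n"

definition nbw_trans :: "('a, 'b) monoid_scheme \<Rightarrow> nat \<Rightarrow> (nat \<Rightarrow> 'a) \<Rightarrow> (int \<Rightarrow> int \<Rightarrow> real)
    \<Rightarrow> 'a \<times> int \<Rightarrow> 'a \<times> int \<Rightarrow> real" where
  "nbw_trans G n x \<alpha> s t =
     (if fst s \<in> carrier G \<and> snd s \<in> sidx n \<and> snd t \<in> sidx n \<and> snd t \<noteq> - snd s
         \<and> fst t = fst s \<otimes>\<^bsub>G\<^esub> nbw_gen G x (snd t)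
      then \<alpha> (snd s) (snd t) else 0)"

fun nbw_trans_pow :: "('a, 'b) monoid_scheme \<Rightarrow> nat \<Rightarrow> (nat \<Rightarrow> 'a) \<Rightarrow> (int \<Rightarrow> int \<Rightarrow> real)
    \<Rightarrow> nat \<Rightarrow> 'a \<times> int \<Rightarrow> 'a \<times> int \<Rightarrow> real" where
  "nbw_trans_pow G n x \<alpha> 0 s t = (if s = t then 1 else 0)"
| "nbw_trans_pow G n x \<alpha> (Suc l) s t =
     (\<Sum>u\<in>nbw_states G n. nbw_trans_pow G n x \<alpha> l s u * nbw_trans G n x \<alpha> u t)"

definition nbw_init :: "('a, 'b) monoid_scheme \<Rightarrow> nat \<Rightarrow> (nat \<Rightarrow> 'a) \<Rightarrow> (int \<Rightarrow> real) \<Rightarrow> 'a \<times> int \<Rightarrow> real" where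
  "nbw_init G n x \<beta> s = (if snd s \<in> sidx n \<and> fst s = nbw_gen G x (snd s) then \<beta> (snd s) else 0)"

definition nbw_dist :: "('a, 'b) monoid_scheme \<Rightarrow> nat \<Rightarrow> (nat \<Rightarrow> 'a) \<Rightarrow> (int \<Rightarrow> int \<Rightarrow> real)
    \<Rightarrow> (int \<Rightarrow> real) \<Rightarrow> nat \<Rightarrow> 'a \<times> int \<Rightarrow> real" where
  "nbw_dist G n x \<alpha> \<beta> l t =
     (\<Sum>s\<in>nbw_states G n. nbw_init G n x \<beta> s * nbw_trans_pow G n x \<alpha> (l - 1) s t)"

definition nbw_sum_dist :: "('a, 'b) monoid_scheme \<Rightarrow> nat \<Rightarrow> (nat \<Rightarrow> 'a) \<Rightarrow> (int \<Rightarrow> int \<Rightarrow> real)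
    \<Rightarrow> (int \<Rightarrow> real) \<Rightarrow> nat \<Rightarrow> 'a \<Rightarrow> real" where
  "nbw_sum_dist G n x \<alpha> \<beta> l g = (\<Sum>e\<in>sidx n. nbw_dist G n x \<alpha> \<beta> l (g, e))"

definition nbw_period :: "('a, 'b) monoid_scheme \<Rightarrow> nat \<Rightarrow> (nat \<Rightarrow> 'a) \<Rightarrow> (int \<Rightarrow> int \<Rightarrow> real)
    \<Rightarrow> 'a \<times> int \<Rightarrow> nat" where
  "nbw_period G n x \<alpha> s = Gcd {l. l \<ge> 1 \<and> nbw_trans_pow G n x \<alpha> l s s > 0}"

definition nbw_aperiodic :: "('a, 'b) monoid_scheme \<Rightarrow> nat \<Rightarrow> (nat \<Rightarrow> 'a) \<Rightarrow> (int \<Rightarrow> int \<Rightarrow> real) \<Rightarrow> bool" where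
  "nbw_aperiodic G n x \<alpha> = (\<forall>s\<in>nbw_states G n. nbw_period G n x \<alpha> s = 1)"

end

theory Submission
  imports Defs "HOL-Number_Theory.Cong"
begin

text \<open>
  Reachability in exactly \<open>l\<close> steps is irreducible on \<open>\<Omega> = G \<times> {\<plusminus>1, \<dots>, \<plusminus>n}\<close>: because
  \<open>n \<ge> 2\<close>, the walk can always change direction without moving in \<open>G\<close>, and the generators reach
  every group element. Hence \<open>\<Omega>\<close> carries a phase modulo the period \<open>d\<close>, and all states are
  reachable from each other in every large number of steps compatible with the phases. The phase of
  \<open>(g, e)\<close> does not depend on \<open>e\<close>, and the loop \<open>1 \<rightarrow> x\<^sub>1 \<rightarrow> 1\<close> (with a change of direction at
  \<open>x\<^sub>1\<close>) shows \<open>d dvd 2\<close>. For \<open>d = 2\<close> the phase parity is a homomorphism \<open>G \<rightarrow> \<int>/2\<int>\<close> that is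
  nontrivial on every generator; its kernel \<open>H\<close> has index 2 and the summed process alternates
  between \<open>H\<close> and \<open>G - H\<close>.

  The transition kernel commutes with left translation, so the difference between the law of
  \<open>X\<^sub>l\<close> and its translate by an element \<open>a\<close> of \<open>H\<close> (of \<open>G\<close> if \<open>d = 1\<close>) evolves by the
  same kernel and has zero mass on each parity class. Some power of the kernel is bounded
  below on each class, so a Doeblin argument contracts this difference to \<open>0\<close> in \<open>\<ell>\<^sup>1\<close>: the law of
  the summed process becomes asymptotically constant on the cosets of \<open>H\<close>.
\<close>

section \<open>Additively closed sets of natural numbers\<close>

lemma add_closed_mult_mem:
  fixes S :: "nat set"
  assumes add: "\<forall>x\<in>S. \<forall>y\<in>S. x + y \<in> S" and x: "x \<in> S" and k: "k \<ge> 1"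
  shows "k * x \<in> S"
  using k
proof (induction k rule: dec_induct)
  case (step k)
  then show ?case using add x by (simp add: add.commute)
qed (use x in simp)

lemma add_closed_insert_zero_mult_mem:
  fixes S :: "nat set"
  assumes "\<forall>x\<in>S. \<forall>y\<in>S. x + y \<in> S" and "x \<in> insert 0 S"
  shows "k * x \<in> insert 0 S"
  using assms add_closed_mult_mem[of S x k] by (cases "k = 0") auto

lemma add_closed_large_multiples:
  fixes S :: "nat set"
  assumes add: "\<forall>x\<in>S. \<forall>y\<in>S. x + y \<in> S"
    and q: "q \<in> insert 0 S" and qd: "q + d \<in> S" and dvd: "d dvd q"
  shows "\<exists>N. \<forall>k\<ge>N. k * d \<in> S"
proof -
  obtain b where b: "q = b * d" using dvd by (metis dvdE mult.commute)
  show ?thesis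
  proof (cases "b = 0")
    case True
    then show ?thesis using add_closed_mult_mem[OF add] qd b by auto
  next
    case False
    have qS: "q \<in> S" using q b False qd by auto
    have "k * d \<in> S" if kb: "k \<ge> b * b" for k
    proof -
      define a r where "a = k div b" and "r = k mod b"
      have rb: "r < b" and keq: "k = a * b + r" using False by (simp_all add: a_def r_def)
      have "b \<le> a"
      proof (rule ccontr)
        assume "\<not> b \<le> a"
        then have "(a + 1) * b \<le> b * b" by (intro mult_right_mono) auto
        then show False using keq rb kb by (simp add: algebra_simps)
      qed
      then have "k * d = (a - r) * q + r * (q + d)"
        using keq b rb by (simp add: algebra_simps diff_mult_distrib)
      moreover have "(a - r) * q \<in> S" using add_closed_mult_mem[OF add qS] \<open>b \<le> a\<close> rb by simp
      moreover have "r * (q + d) \<in> insert 0 S"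
        using add_closed_insert_zero_mult_mem[OF add] qd by blast
      ultimately show ?thesis using add by auto
    qed
    then show ?thesis by blast
  qed
qed

lemma add_closed_Gcd_large_multiples:
  fixes S :: "nat set"
  assumes ne: "S \<noteq> {}" and pos: "0 \<notin> S" and add: "\<forall>x\<in>S. \<forall>y\<in>S. x + y \<in> S"
  shows "\<exists>N. \<forall>k\<ge>N. k * Gcd S \<in> S"
proof -
  define S0 where "S0 = insert 0 S"
  have S0_add: "x + y \<in> S0" if "x \<in> S0" "y \<in> S0" for x y
    using that add unfolding S0_def by auto
  have S0_mult: "k * x \<in> S0" if "x \<in> S0" for k x
    using add_closed_insert_zero_mult_mem[OF add] that unfolding S0_def .
  define gap where "gap z \<longleftrightarrow> (\<exists>p\<in>S0. \<exists>q\<in>S0. q < p \<and> z = p - q)" for z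
  obtain s where s: "s \<in> S" using ne by auto
  have "0 < s" using s pos by (cases s) auto
  then have "gap s" unfolding gap_def S0_def using s by force
  \<comment> \<open>the least positive difference of two elements of \<open>S \<union> {0}\<close> turns out to be \<open>Gcd S\<close>\<close>
  define d where "d = (LEAST z. gap z)"
  have "gap d" unfolding d_def by (rule LeastI) fact
  then obtain p q where pq: "p \<in> S0" "q \<in> S0" "q < p" "d = p - q" unfolding gap_def by blast
  have d_dvd: "d dvd y" if y: "y \<in> S" for y
  proof (rule ccontr)
    assume "\<not> d dvd y"
    then have r: "0 < y mod d" "y mod d < d" using pq by (auto simp: dvd_eq_mod_eq_0)
    have "p = q + d" using pq by simp
    then have eq: "y + (y div d) * q = (y div d) * p + y mod d"
      using div_mult_mod_eq[of y d] by (simp add: algebra_simps)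
    have "y \<in> S0" using y unfolding S0_def by simp
    then have "y + (y div d) * q \<in> S0" "(y div d) * p \<in> S0"
      using S0_add S0_mult pq by auto
    moreover have "(y div d) * p < y + (y div d) * q"
      and "y mod d = (y + (y div d) * q) - (y div d) * p" using eq r(1) by linarith+
    ultimately have "gap (y mod d)" unfolding gap_def by blast
    then show False using Least_le[of gap "y mod d"] r(2) unfolding d_def by simp
  qed
  have "Gcd S dvd p" "Gcd S dvd q" using pq unfolding S0_def by auto
  then have "Gcd S dvd d" using pq by simp
  moreover have "d dvd Gcd S" using d_dvd by (simp add: Gcd_greatest)
  ultimately have "Gcd S = d" by (simp add: dvd_antisym)
  moreover have "\<exists>N. \<forall>k\<ge>N. k * d \<in> S"
  proof (rule add_closed_large_multiples[OF add])
    show "q \<in> insert 0 S" "q + d \<in> S" using pq pos unfolding S0_def by auto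
    show "d dvd q" using pq d_dvd unfolding S0_def by auto
  qed
  ultimately show ?thesis by simp
qed

section \<open>Periods of irreducible reachability relations\<close>

locale irreducible_reach =
  fixes S :: "'s set" and R :: "nat \<Rightarrow> 's \<Rightarrow> 's \<Rightarrow> bool" and s0 :: 's
  assumes finite_S: "finite S" and s0_in_S: "s0 \<in> S"
    and reach_trans: "\<And>a b s u t. R a s u \<Longrightarrow> R b u t \<Longrightarrow> s \<in> S \<Longrightarrow> u \<in> S \<Longrightarrow> t \<in> S \<Longrightarrow> R (a + b) s t"
    and irreducible: "\<And>s t. s \<in> S \<Longrightarrow> t \<in> S \<Longrightarrow> \<exists>l. R l s t"
    and returns: "\<exists>l>0. R l s0 s0"
begin

definition period :: nat where
  "period = Gcd {l. 0 < l \<and> R l s0 s0}"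

definition phase :: "'s \<Rightarrow> nat" where
  "phase t = (SOME a. R a s0 t)"

definition return_time :: "'s \<Rightarrow> nat" where
  "return_time t = (SOME b. R b t s0)"

lemma reach_phase: "t \<in> S \<Longrightarrow> R (phase t) s0 t"
  unfolding phase_def using irreducible[OF s0_in_S] by (rule someI_ex)

lemma reach_return_time: "t \<in> S \<Longrightarrow> R (return_time t) t s0"
  unfolding return_time_def using irreducible[OF _ s0_in_S] by (rule someI_ex)

lemma period_dvd_return: "R l s0 s0 \<Longrightarrow> period dvd l"
  unfolding period_def by (cases "l = 0") (auto intro: Gcd_dvd)

lemma period_dvd_cycle: "R a s0 t \<Longrightarrow> R b t s0 \<Longrightarrow> t \<in> S \<Longrightarrow> period dvd a + b"
  using reach_trans[of a s0 t b s0] s0_in_S by (auto intro: period_dvd_return)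

lemma period_pos: "0 < period"
proof -
  obtain l where "0 < l" "R l s0 s0" using returns by blast
  then show ?thesis using period_dvd_return by (intro gr0I) auto
qed

lemma reach_phase_cong:
  assumes "s \<in> S" "t \<in> S" "R l s t"
  shows "[phase s + l = phase t] (mod period)"
proof -
  have "R (phase s + l) s0 t" using reach_trans[OF reach_phase assms(3)] assms s0_in_S by blast
  then have "[phase s + l + return_time t = 0] (mod period)"
    using period_dvd_cycle reach_return_time assms(2) by (simp add: cong_0_iff)
  moreover have "[phase t + return_time t = 0] (mod period)"
    using period_dvd_cycle[OF reach_phase reach_return_time] assms(2) by (simp add: cong_0_iff)
  ultimately have "[phase s + l + return_time t = phase t + return_time t] (mod period)"
    by (rule cong_trans[OF _ cong_sym])
  then show ?thesis by (simp only: cong_add_rcancel_nat)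
qed

lemma cong_phase_reach:
  "\<exists>M. \<forall>s\<in>S. \<forall>t\<in>S. \<forall>l\<ge>M. [phase s + l = phase t] (mod period) \<longrightarrow> R l s t"
proof -
  define RS where "RS = {l. 0 < l \<and> R l s0 s0}"
  have "RS \<noteq> {}" "0 \<notin> RS" using returns unfolding RS_def by auto
  moreover have "\<forall>x\<in>RS. \<forall>y\<in>RS. x + y \<in> RS"
    unfolding RS_def using reach_trans[of _ s0 s0 _ s0] s0_in_S by simp
  ultimately have "\<exists>N. \<forall>k\<ge>N. k * Gcd RS \<in> RS" by (rule add_closed_Gcd_large_multiples)
  then obtain N where N: "\<And>k. k \<ge> N \<Longrightarrow> k * period \<in> RS"
    unfolding period_def RS_def by blast
  have loop: "R (k * period) s0 s0" if "k \<ge> N" for k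
    using N[OF that] unfolding RS_def by simp
  define M where "M = Max (return_time ` S) + Max (phase ` S) + N * period"
  have "R l s t" if st: "s \<in> S" "t \<in> S" and "l \<ge> M" and cg: "[phase s + l = phase t] (mod period)"
    for s t l
  proof -
    have "return_time s \<le> Max (return_time ` S)" "phase t \<le> Max (phase ` S)"
      using finite_S st by simp_all
    \<comment> \<open>go from \<open>s\<close> to \<open>s0\<close>, loop there for \<open>L\<close> steps, then go to \<open>t\<close>\<close>
    define L where "L = l - (return_time s + phase t)"
    have lL: "l = return_time s + L + phase t" and LN: "L \<ge> N * period"
      using \<open>l \<ge> M\<close> \<open>return_time s \<le> _\<close> \<open>phase t \<le> _\<close> unfolding L_def M_def by simp_all
    have cyc: "[phase s + return_time s = 0] (mod period)"
      using period_dvd_cycle[OF reach_phase reach_return_time] st(1) by (simp add: cong_0_iff)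
    have "phase s + l = (phase s + return_time s + L) + phase t" using lL by simp
    then have "[(phase s + return_time s + L) + phase t = 0 + phase t] (mod period)"
      using cg by (simp add: add.assoc)
    then have total: "[(phase s + return_time s) + L = 0] (mod period)"
      by (simp only: cong_add_rcancel_nat)
    have "[(phase s + return_time s) + L = 0 + L] (mod period)"
      using cyc by (simp only: cong_add_rcancel_nat)
    from cong_trans[OF cong_sym[OF this] total] have "[0 + L = 0] (mod period)" .
    then have "[L = 0] (mod period)" by simp
    then obtain k where k: "L = k * period" by (metis cong_0_iff dvdE mult.commute)
    then have "k \<ge> N" using LN period_pos by simp
    then have "R L s0 s0" using loop k by simp
    then have "R (return_time s + L) s s0" using reach_trans[OF reach_return_time] st(1) s0_in_S by blast
    then show ?thesis using reach_trans[OF _ reach_phase] st s0_in_S lL by blast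
  qed
  then show ?thesis by blast
qed

end

section \<open>Contraction and limits of distributions\<close>

lemma class_doeblin_contraction:
  fixes Q :: "'s \<Rightarrow> 's \<Rightarrow> real" and v :: "'s \<Rightarrow> real" and c :: "'s \<Rightarrow> 'c"
  assumes fin: "finite S"
    and nonneg: "\<And>s t. s \<in> S \<Longrightarrow> t \<in> S \<Longrightarrow> 0 \<le> Q s t"
    and rows: "\<And>s. s \<in> S \<Longrightarrow> (\<Sum>t\<in>S. Q s t) = 1"
    and lower: "\<And>s t. s \<in> S \<Longrightarrow> t \<in> S \<Longrightarrow> c s = c t \<Longrightarrow> \<delta> \<le> Q s t"
    and balanced: "\<And>t. t \<in> S \<Longrightarrow> (\<Sum>s\<in>{s\<in>S. c s = c t}. v s) = 0"
    and \<delta>: "0 \<le> \<delta>"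
  shows "(\<Sum>t\<in>S. \<bar>\<Sum>s\<in>S. v s * Q s t\<bar>) \<le> (1 - \<delta>) * (\<Sum>s\<in>S. \<bar>v s\<bar>)"
proof -
  \<comment> \<open>since \<open>v\<close> sums to zero on every class, the part \<open>\<delta>\<close> of \<open>Q\<close> common to a class can be removed\<close>
  define Q' where "Q' s t = Q s t - (if c s = c t then \<delta> else 0)" for s t
  have Q'_nonneg: "0 \<le> Q' s t" if "s \<in> S" "t \<in> S" for s t
    using lower[OF that] nonneg[OF that] unfolding Q'_def by auto
  have same: "(\<Sum>s\<in>S. v s * Q s t) = (\<Sum>s\<in>S. v s * Q' s t)" if t: "t \<in> S" for t
  proof -
    have "(\<Sum>s\<in>S. v s * (if c s = c t then \<delta> else 0)) = (\<Sum>s\<in>S. if c s = c t then \<delta> * v s else 0)"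
      by (intro sum.cong) auto
    also have "\<dots> = (\<Sum>s\<in>{s\<in>S. c s = c t}. \<delta> * v s)"
      by (rule sum.inter_filter[OF fin, symmetric])
    also have "\<dots> = \<delta> * (\<Sum>s\<in>{s\<in>S. c s = c t}. v s)"
      by (rule sum_distrib_left[symmetric])
    finally have "(\<Sum>s\<in>S. v s * (if c s = c t then \<delta> else 0)) = \<delta> * (\<Sum>s\<in>{s\<in>S. c s = c t}. v s)" .
    then show ?thesis using balanced[OF t] by (simp add: Q'_def right_diff_distrib sum_subtractf)
  qed
  have row': "(\<Sum>t\<in>S. Q' s t) \<le> 1 - \<delta>" if s: "s \<in> S" for s
  proof -
    have "\<delta> \<le> (\<Sum>t\<in>S. if c s = c t then \<delta> else 0)"
      using member_le_sum[of s S "\<lambda>t. if c s = c t then \<delta> else 0"] s fin \<delta> by simp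
    then show ?thesis using rows[OF s] by (simp add: Q'_def sum_subtractf)
  qed
  have "(\<Sum>t\<in>S. \<bar>\<Sum>s\<in>S. v s * Q s t\<bar>) \<le> (\<Sum>t\<in>S. \<Sum>s\<in>S. \<bar>v s\<bar> * Q' s t)"
  proof (rule sum_mono)
    fix t assume t: "t \<in> S"
    have "\<bar>\<Sum>s\<in>S. v s * Q' s t\<bar> \<le> (\<Sum>s\<in>S. \<bar>v s * Q' s t\<bar>)" by (rule sum_abs)
    also have "\<dots> = (\<Sum>s\<in>S. \<bar>v s\<bar> * Q' s t)"
      using Q'_nonneg t by (intro sum.cong) (auto simp: abs_mult)
    finally show "\<bar>\<Sum>s\<in>S. v s * Q s t\<bar> \<le> (\<Sum>s\<in>S. \<bar>v s\<bar> * Q' s t)" using same[OF t] by simp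
  qed
  also have "\<dots> = (\<Sum>s\<in>S. \<bar>v s\<bar> * (\<Sum>t\<in>S. Q' s t))"
    by (subst sum.swap) (simp add: sum_distrib_left)
  also have "\<dots> \<le> (\<Sum>s\<in>S. \<bar>v s\<bar> * (1 - \<delta>))"
    by (intro sum_mono mult_left_mono row') simp_all
  also have "\<dots> = (1 - \<delta>) * (\<Sum>s\<in>S. \<bar>v s\<bar>)" by (simp add: sum_distrib_left mult.commute)
  finally show ?thesis .
qed

lemma contracting_tendsto_zero:
  fixes f :: "nat \<Rightarrow> real"
  assumes nonneg: "\<And>j. 0 \<le> f j" and decr: "\<And>j. f (Suc j) \<le> f j"
    and contr: "\<And>j. f (j + m) \<le> c * f j" and "c < 1"
  shows "f \<longlonglongrightarrow> 0"
proof -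
  obtain L where L: "f \<longlonglongrightarrow> L" "\<forall>j. L \<le> f j"
    using decseq_convergent[of f 0] decr nonneg by (auto simp: decseq_Suc_iff)
  have "(\<lambda>j. f (j + m)) \<longlonglongrightarrow> L" using LIMSEQ_ignore_initial_segment[OF L(1)] .
  then have "L \<le> c * L" using contr by (intro LIMSEQ_le[OF _ tendsto_mult_left[OF L(1)]]) auto
  moreover have "0 \<le> L" using L(1) nonneg by (intro LIMSEQ_le_const) auto
  ultimately have "L = 0" using \<open>c < 1\<close> by (smt (verit) mult_le_cancel_right1)
  then show ?thesis using L(1) by simp
qed

lemma tendsto_uniform_on_support:
  fixes F :: "nat \<Rightarrow> 'g \<Rightarrow> real"
  assumes fin: "finite A" and C: "C \<subseteq> A" "C \<noteq> {}"
    and total: "\<And>l. (\<Sum>h\<in>A. F l h) = 1"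
    and outside: "\<forall>\<^sub>F l in sequentially. \<forall>h\<in>A - C. F l h = 0"
    and diff: "\<And>g h. g \<in> C \<Longrightarrow> h \<in> C \<Longrightarrow> (\<lambda>l. F l g - F l h) \<longlonglongrightarrow> 0"
    and g: "g \<in> A"
  shows "(\<lambda>l. F l g) \<longlonglongrightarrow> (if g \<in> C then 1 / real (card C) else 0)"
proof (cases "g \<in> C")
  case True
  have card: "real (card C) > 0" using C fin by (simp add: card_gt_0_iff finite_subset)
  have "\<forall>\<^sub>F l in sequentially. (\<Sum>h\<in>C. F l h) = 1"
    using outside by eventually_elim (metis total sum.mono_neutral_right[OF fin C(1)])
  then have "\<forall>\<^sub>F l in sequentially. (1 + (\<Sum>h\<in>C. F l g - F l h)) / real (card C) = F l g"
    by eventually_elim (use card in \<open>simp add: sum_subtractf field_simps\<close>)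
  moreover have "(\<lambda>l. (1 + (\<Sum>h\<in>C. F l g - F l h)) / real (card C)) \<longlonglongrightarrow> (1 + 0) / real (card C)"
    using True diff card by (intro tendsto_intros tendsto_null_sum) auto
  ultimately show ?thesis using True by (simp add: Lim_transform_eventually)
next
  case False
  have "\<forall>\<^sub>F l in sequentially. F l g = 0" using outside by eventually_elim (use False g in simp)
  then show ?thesis using False by (simp add: tendsto_eventually)
qed

section \<open>Homomorphisms onto \<open>\<int>/2\<int>\<close>\<close>

lemma cong_two_iff_even: "[a = b] (mod 2) \<longleftrightarrow> (even a \<longleftrightarrow> even b)" for a b :: nat
  unfolding cong_def by (cases "even a"; cases "even b") (simp_all add: even_iff_mod_2_eq_zero odd_iff_mod_2_eq_one)

text \<open>A homomorphism onto \<open>\<int>/2\<int>\<close>, encoded as a predicate (\<open>True\<close> is the nontrivial class).\<close>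
definition parity_hom :: "('a, 'b) monoid_scheme \<Rightarrow> ('a \<Rightarrow> bool) \<Rightarrow> bool" where
  "parity_hom G p \<longleftrightarrow> (\<forall>a\<in>carrier G. \<forall>b\<in>carrier G. p (a \<otimes>\<^bsub>G\<^esub> b) = (p a \<noteq> p b))"

context group
begin

lemma parity_hom_one: "parity_hom G p \<Longrightarrow> \<not> p \<one>"
  unfolding parity_hom_def by (metis one_closed r_one)

lemma parity_hom_inv: "parity_hom G p \<Longrightarrow> a \<in> carrier G \<Longrightarrow> p (inv a) = p a"
  using parity_hom_one[of p] unfolding parity_hom_def by (metis inv_closed r_inv)

lemma parity_hom_generate:
  assumes gen: "generate G A = carrier G" and A: "A \<subseteq> carrier G" and one: "\<not> p \<one>"
    and flip: "\<And>h y. h \<in> carrier G \<Longrightarrow> y \<in> A \<Longrightarrow> p (h \<otimes> y) = (\<not> p h) \<and> p (h \<otimes> inv y) = (\<not> p h)"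
  shows "parity_hom G p"
proof -
  have "\<forall>a\<in>carrier G. p (a \<otimes> b) = (p a \<noteq> p b)" if "b \<in> generate G A" for b
    using that
  proof (induction rule: generate.induct)
    case (incl y)
    then have "y \<in> carrier G" using A by auto
    then have "p y" using flip[OF one_closed incl] one by simp
    then show ?case using flip incl by auto
  next
    case (inv y)
    then have "y \<in> carrier G" using A by auto
    then have "p (inv y)" using flip[OF one_closed inv] one by simp
    then show ?case using flip inv by auto
  next
    case (eng h1 h2)
    then have "h1 \<in> carrier G" "h2 \<in> carrier G" using generate_in_carrier[OF A] by auto
    then show ?case using eng.IH by (auto simp: m_assoc[symmetric])
  qed (use one in simp)
  then show ?thesis unfolding parity_hom_def using gen by auto
qed

lemma parity_hom_kernel_subgroup:
  assumes "parity_hom G p"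
  shows "subgroup {g \<in> carrier G. \<not> p g} G"
  using assms parity_hom_one[OF assms] parity_hom_inv[OF assms]
  by (intro subgroupI) (auto simp: parity_hom_def)

lemma parity_hom_kernel_index_two:
  assumes p: "parity_hom G p" and a: "a \<in> carrier G" "p a"
  shows "card (rcosets {g \<in> carrier G. \<not> p g}) = 2"
proof -
  define H where "H = {g \<in> carrier G. \<not> p g}"
  have coset: "H #> b = {g \<in> carrier G. p g = p b}" if b: "b \<in> carrier G" for b
  proof
    show "H #> b \<subseteq> {g \<in> carrier G. p g = p b}"
      using p b unfolding r_coset_def H_def parity_hom_def by auto
    show "{g \<in> carrier G. p g = p b} \<subseteq> H #> b"
    proof
      fix g assume g: "g \<in> {g \<in> carrier G. p g = p b}"
      then have "g \<otimes> inv b \<in> H"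
        using b p parity_hom_inv[OF p b] unfolding H_def parity_hom_def by auto
      moreover have "g = (g \<otimes> inv b) \<otimes> b" using g b by (simp add: m_assoc)
      ultimately show "g \<in> H #> b" unfolding r_coset_def by blast
    qed
  qed
  have "rcosets H = {{g \<in> carrier G. \<not> p g}, {g \<in> carrier G. p g}}"
  proof
    show "rcosets H \<subseteq> {{g \<in> carrier G. \<not> p g}, {g \<in> carrier G. p g}}"
      unfolding RCOSETS_def using coset by auto
    have "H #> \<one> = {g \<in> carrier G. \<not> p g}" "H #> a = {g \<in> carrier G. p g}"
      using coset[OF one_closed] coset[OF a(1)] parity_hom_one[OF p] a(2) by auto
    then show "{{g \<in> carrier G. \<not> p g}, {g \<in> carrier G. p g}} \<subseteq> rcosets H"
      unfolding RCOSETS_def using a(1) by blast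
  qed
  moreover have "{g \<in> carrier G. \<not> p g} \<noteq> {g \<in> carrier G. p g}" using parity_hom_one[OF p] by auto
  ultimately show ?thesis unfolding H_def by simp
qed

end

section \<open>The non-backtracking walk\<close>

locale nonbacktracking_walk = group +
  fixes n :: nat and xg :: "nat \<Rightarrow> 'a" and \<alpha> :: "int \<Rightarrow> int \<Rightarrow> real" and \<beta> :: "int \<Rightarrow> real"
  assumes finite_carrier: "finite (carrier G)"
    and two_le_n: "n \<ge> 2"
    and xg_closed: "\<And>i. i \<in> {1..n} \<Longrightarrow> xg i \<in> carrier G"
    and generates: "generate G (xg ` {1..n}) = carrier G"
    and \<alpha>_pos: "\<And>e' e. e' \<in> sidx n \<Longrightarrow> e \<in> sidx n \<Longrightarrow> e \<noteq> - e' \<Longrightarrow> \<alpha> e' e > 0"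
    and \<alpha>_sum: "\<And>e'. e' \<in> sidx n \<Longrightarrow> (\<Sum>e\<in>sidx n - {- e'}. \<alpha> e' e) = 1"
    and \<beta>_pos: "\<And>e. e \<in> sidx n \<Longrightarrow> \<beta> e > 0"
    and \<beta>_sum: "(\<Sum>e\<in>sidx n. \<beta> e) = 1"
begin

abbreviation "\<Omega> \<equiv> nbw_states G n"
abbreviation "Pt \<equiv> nbw_trans G n xg \<alpha>"
abbreviation "Pw \<equiv> nbw_trans_pow G n xg \<alpha>"
abbreviation "gn \<equiv> nbw_gen G xg"
abbreviation "sum_law \<equiv> nbw_sum_dist G n xg \<alpha> \<beta>"

lemma finite_sidx: "finite (sidx n)"
  by (rule finite_subset[of _ "{- int n..int n}"]) (auto simp: sidx_def)

lemma finite_\<Omega>: "finite \<Omega>"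
  unfolding nbw_states_def using finite_carrier finite_sidx by simp

lemma mem_\<Omega> [simp]: "(g, e) \<in> \<Omega> \<longleftrightarrow> g \<in> carrier G \<and> e \<in> sidx n"
  unfolding nbw_states_def by simp

lemma sidx_uminus: "e \<in> sidx n \<Longrightarrow> - e \<in> sidx n"
  unfolding sidx_def by auto

lemma sidx_nonzero: "e \<in> sidx n \<Longrightarrow> e \<noteq> 0"
  unfolding sidx_def by auto

lemma sidx_of_nat: "k \<in> {1..n} \<Longrightarrow> int k \<in> sidx n"
  unfolding sidx_def by auto

lemma one_in_sidx: "1 \<in> sidx n" and minus_one_in_sidx: "- 1 \<in> sidx n"
  using two_le_n unfolding sidx_def by auto

lemma xg_nat_closed: "e \<in> sidx n \<Longrightarrow> xg (nat \<bar>e\<bar>) \<in> carrier G"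
  unfolding sidx_def by (intro xg_closed) auto

lemma gn_closed: "e \<in> sidx n \<Longrightarrow> gn e \<in> carrier G"
  using xg_nat_closed[of e] unfolding nbw_gen_def by (auto split: if_splits)

lemma gn_of_nat: "0 < k \<Longrightarrow> gn (int k) = xg k"
  unfolding nbw_gen_def by simp

lemma gn_minus_of_nat: "0 < k \<Longrightarrow> gn (- int k) = inv (xg k)"
  unfolding nbw_gen_def by simp

lemma gn_uminus: "e \<in> sidx n \<Longrightarrow> gn (- e) = inv (gn e)"
  using xg_nat_closed[of e] sidx_nonzero[of e] unfolding nbw_gen_def by (auto split: if_splits)

lemma Pt_nonneg: "0 \<le> Pt s t"
  unfolding nbw_trans_def using \<alpha>_pos by (auto intro: less_imp_le)

lemma Pt_nonzeroD:
  "Pt s t \<noteq> 0 \<Longrightarrow> fst s \<in> carrier G \<and> snd s \<in> sidx n \<and> snd t \<in> sidx n \<and> fst t = fst s \<otimes> gn (snd t)"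
  unfolding nbw_trans_def by (auto split: if_splits)

lemma Pt_step: "h \<in> carrier G \<Longrightarrow> e' \<in> sidx n \<Longrightarrow> e \<in> sidx n \<Longrightarrow> e \<noteq> - e'
   \<Longrightarrow> Pt (h, e') (h \<otimes> gn e, e) = \<alpha> e' e"
  unfolding nbw_trans_def by simp

lemma Pw_nonneg: "0 \<le> Pw l s t"
  by (induction l arbitrary: t) (auto intro!: sum_nonneg mult_nonneg_nonneg Pt_nonneg)

lemma Pt_row_sum:
  assumes s: "s \<in> \<Omega>"
  shows "(\<Sum>t\<in>\<Omega>. Pt s t) = 1"
proof -
  obtain h e' where he: "s = (h, e')" and h: "h \<in> carrier G" and e': "e' \<in> sidx n"
    using s by (cases s) auto
  have column: "(\<Sum>g\<in>carrier G. Pt (h, e') (g, e)) = (if e \<noteq> - e' then \<alpha> e' e else 0)"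
    if e: "e \<in> sidx n" for e
  proof -
    have "(\<Sum>g\<in>carrier G. Pt (h, e') (g, e))
        = (\<Sum>g\<in>carrier G. if g = h \<otimes> gn e then (if e \<noteq> - e' then \<alpha> e' e else 0) else 0)"
      by (rule sum.cong) (auto simp: nbw_trans_def h e e')
    then show ?thesis using h gn_closed[OF e] by (simp add: sum.delta[OF finite_carrier])
  qed
  have "(\<Sum>t\<in>\<Omega>. Pt s t) = (\<Sum>g\<in>carrier G. \<Sum>e\<in>sidx n. Pt (h, e') (g, e))"
    unfolding nbw_states_def he by (simp add: sum.cartesian_product)
  also have "\<dots> = (\<Sum>e\<in>sidx n. \<Sum>g\<in>carrier G. Pt (h, e') (g, e))" by (rule sum.swap)
  also have "\<dots> = (\<Sum>e\<in>sidx n. if e \<noteq> - e' then \<alpha> e' e else 0)"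
    by (rule sum.cong) (auto simp: column)
  also have "\<dots> = (\<Sum>e\<in>sidx n - {- e'}. \<alpha> e' e)"
    by (simp add: sum.inter_filter[OF finite_sidx] set_diff_eq)
  finally show ?thesis using \<alpha>_sum[OF e'] by simp
qed

lemma Pw_row_sum: "s \<in> \<Omega> \<Longrightarrow> (\<Sum>t\<in>\<Omega>. Pw l s t) = 1"
proof (induction l)
  case 0
  then show ?case using finite_\<Omega> by simp
next
  case (Suc l)
  have "(\<Sum>t\<in>\<Omega>. Pw (Suc l) s t) = (\<Sum>u\<in>\<Omega>. Pw l s u * (\<Sum>t\<in>\<Omega>. Pt u t))"
    by (simp add: sum_distrib_left) (rule sum.swap)
  also have "\<dots> = (\<Sum>u\<in>\<Omega>. Pw l s u)" by (rule sum.cong) (auto simp: Pt_row_sum)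
  finally show ?case using Suc by simp
qed

lemma Pw_one: "s \<in> \<Omega> \<Longrightarrow> Pw 1 s t = Pt s t"
  using finite_\<Omega> by (simp add: if_distrib[of "\<lambda>x. x * _"] cong: if_cong)

lemma Pw_add: "t \<in> \<Omega> \<Longrightarrow> Pw (a + b) s t = (\<Sum>u\<in>\<Omega>. Pw a s u * Pw b u t)"
proof (induction b arbitrary: t)
  case 0
  then show ?case using finite_\<Omega> by (simp add: if_distrib[of "\<lambda>x. _ * x"] cong: if_cong)
next
  case (Suc b)
  have "Pw (a + Suc b) s t = (\<Sum>w\<in>\<Omega>. (\<Sum>u\<in>\<Omega>. Pw a s u * Pw b u w) * Pt w t)"
    by (simp add: Suc.IH)
  also have "\<dots> = (\<Sum>w\<in>\<Omega>. \<Sum>u\<in>\<Omega>. Pw a s u * (Pw b u w * Pt w t))"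
    by (simp add: sum_distrib_right mult.assoc)
  also have "\<dots> = (\<Sum>u\<in>\<Omega>. Pw a s u * Pw (Suc b) u t)"
    by (subst sum.swap) (simp add: sum_distrib_left)
  finally show ?case .
qed

definition reach :: "nat \<Rightarrow> 'a \<times> int \<Rightarrow> 'a \<times> int \<Rightarrow> bool" where
  "reach l s t \<longleftrightarrow> 0 < Pw l s t"

lemma reach_zero: "reach 0 s s"
  unfolding reach_def by simp

lemma reach_trans:
  assumes "reach a s u" "reach b u t" "u \<in> \<Omega>" "t \<in> \<Omega>"
  shows "reach (a + b) s t"
proof -
  have "0 < Pw a s u * Pw b u t" using assms unfolding reach_def by simp
  also have "\<dots> \<le> (\<Sum>u\<in>\<Omega>. Pw a s u * Pw b u t)"
    by (rule member_le_sum) (use assms finite_\<Omega> in \<open>auto intro: mult_nonneg_nonneg Pw_nonneg\<close>)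
  finally show ?thesis unfolding reach_def using Pw_add[OF assms(4)] by simp
qed

lemma reach_step: "h \<in> carrier G \<Longrightarrow> e' \<in> sidx n \<Longrightarrow> e \<in> sidx n \<Longrightarrow> e \<noteq> - e'
   \<Longrightarrow> reach 1 (h, e') (h \<otimes> gn e, e)"
  unfolding reach_def by (subst Pw_one) (simp_all add: Pt_step \<alpha>_pos)

lemma reach_straight:
  assumes g: "g \<in> carrier G" and e: "e \<in> sidx n" and f: "f \<in> sidx n" "f \<noteq> - e"
  shows "reach (Suc k) (g, e) (g \<otimes> gn f [^] Suc k, f)"
proof (induction k)
  case 0
  show ?case using reach_step[OF g e f] gn_closed[OF f(1)] by simp
next
  case (Suc k)
  have c: "g \<otimes> gn f [^] Suc k \<in> carrier G" using g gn_closed[OF f(1)] by simp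
  have "reach 1 (g \<otimes> gn f [^] Suc k, f) (g \<otimes> gn f [^] Suc k \<otimes> gn f, f)"
    using reach_step[OF c f(1) f(1)] sidx_nonzero[OF f(1)] by simp
  moreover have "g \<otimes> gn f [^] Suc k \<otimes> gn f = g \<otimes> gn f [^] Suc (Suc k)"
    using g gn_closed[OF f(1)] by (simp add: m_assoc)
  ultimately have "reach 1 (g \<otimes> gn f [^] Suc k, f) (g \<otimes> gn f [^] Suc (Suc k), f)" by simp
  from reach_trans[OF Suc this] show ?case using c f g gn_closed[OF f(1)] by simp
qed

lemma reach_turn:
  assumes g: "g \<in> carrier G" and e: "e \<in> sidx n" and f: "f \<in> sidx n" "f \<noteq> - e"
  shows "reach (order G) (g, e) (g, f)"
proof -
  obtain k where k: "order G = Suc k"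
    using finite_carrier order_gt_0_iff_finite by (metis gr0_implies_Suc)
  show ?thesis
    using reach_straight[OF assms, of k] g gn_closed[OF f(1)] by (simp flip: k add: pow_order_eq_1)
qed

lemma inv_eq_pow: "y \<in> carrier G \<Longrightarrow> inv y = y [^] (2 * order G - 1)"
proof -
  assume y: "y \<in> carrier G"
  have "0 < order G" using finite_carrier order_gt_0_iff_finite by blast
  then have exp: "Suc (2 * order G - 1) = order G * 2" by simp
  have "y [^] (2 * order G - 1) \<otimes> y = y [^] Suc (2 * order G - 1)" by (simp only: nat_pow_Suc)
  also have "\<dots> = y [^] (order G * 2)" by (simp only: exp)
  also have "\<dots> = \<one>" using y by (simp add: nat_pow_pow[symmetric] pow_order_eq_1)
  finally show ?thesis using inv_equality y by simp
qed

lemma reach_mul_gn: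
  assumes h: "h \<in> carrier G" and f: "f \<in> sidx n" and e: "e \<in> sidx n"
  shows "\<exists>k. reach k (h, f) (h \<otimes> gn e, f)"
proof -
  \<comment> \<open>move along a direction \<open>d\<close> of the sign of \<open>f\<close>, so that \<open>f\<close> can be resumed afterwards;
    a generator of the opposite sign is the \<open>(2 order G - 1)\<close>-th power of its inverse\<close>
  have along: "\<exists>k. reach k (h, f) (h \<otimes> gn d [^] Suc r, f)"
    if d: "d \<in> sidx n" "(0 < d) = (0 < f)" for d r
  proof -
    have df: "d \<noteq> - f" "f \<noteq> - d" using d sidx_nonzero[OF f] sidx_nonzero[OF d(1)] by auto
    have c: "h \<otimes> gn d [^] Suc r \<in> carrier G" using h gn_closed[OF d(1)] by simp
    have "reach (Suc r + order G) (h, f) (h \<otimes> gn d [^] Suc r, f)"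
      by (rule reach_trans[OF reach_straight[OF h f d(1) df(1)] reach_turn[OF c d(1) f df(2)]])
        (use c f d in auto)
    then show ?thesis by blast
  qed
  show ?thesis
  proof (cases "(0 < e) = (0 < f)")
    case True
    then show ?thesis using along[OF e, of 0] gn_closed[OF e] by simp
  next
    case False
    then have sign: "(0 < - e) = (0 < f)" using sidx_nonzero[OF e] by auto
    have "0 < order G" using finite_carrier order_gt_0_iff_finite by blast
    then have "Suc (2 * order G - 2) = 2 * order G - 1" by simp
    then have "gn (- e) [^] Suc (2 * order G - 2) = inv (gn (- e))"
      using inv_eq_pow[OF gn_closed[OF sidx_uminus[OF e]]] by simp
    also have "\<dots> = gn e" using gn_uminus[OF e] gn_closed[OF e] by simp
    finally have pow: "gn (- e) [^] Suc (2 * order G - 2) = gn e" .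
    show ?thesis using along[OF sidx_uminus[OF e] sign, of "2 * order G - 2"] unfolding pow .
  qed
qed

lemma reach_mul_generate:
  assumes f: "f \<in> sidx n" and b: "b \<in> generate G (xg ` {1..n})"
  shows "\<forall>h\<in>carrier G. \<exists>k. reach k (h, f) (h \<otimes> b, f)"
  using b
proof (induction rule: generate.induct)
  case one
  then show ?case using reach_zero by auto
next
  case (incl y)
  then obtain i where "i \<in> {1..n}" "y = gn (int i)" using gn_of_nat by auto
  then show ?case using reach_mul_gn[OF _ f sidx_of_nat] by auto
next
  case (inv y)
  then obtain i where "i \<in> {1..n}" "inv y = gn (- int i)" using gn_minus_of_nat by auto
  then show ?case using reach_mul_gn[OF _ f sidx_uminus[OF sidx_of_nat]] by auto
next
  case (eng b1 b2)
  have b: "b1 \<in> carrier G" "b2 \<in> carrier G"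
    using eng.hyps generates by auto
  show ?case
  proof
    fix h assume h: "h \<in> carrier G"
    obtain k1 where k1: "reach k1 (h, f) (h \<otimes> b1, f)" using eng.IH(1) h by auto
    obtain k2 where k2: "reach k2 (h \<otimes> b1, f) (h \<otimes> b1 \<otimes> b2, f)" using eng.IH(2) h b by auto
    have "reach (k1 + k2) (h, f) (h \<otimes> b1 \<otimes> b2, f)"
      by (rule reach_trans[OF k1 k2]) (use h b f in auto)
    then show "\<exists>k. reach k (h, f) (h \<otimes> (b1 \<otimes> b2), f)" using h b by (auto simp: m_assoc)
  qed
qed

lemma reach_same_sign:
  assumes h: "h \<in> carrier G" and f: "f \<in> sidx n" and g: "g \<in> carrier G" and f': "f' \<in> sidx n"
    and sign: "(0 < f) = (0 < f')"
  shows "\<exists>k. reach k (h, f) (g, f')"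
proof -
  have "inv h \<otimes> g \<in> generate G (xg ` {1..n})" using generates h g by auto
  then obtain k where "reach k (h, f) (h \<otimes> (inv h \<otimes> g), f)" using reach_mul_generate[OF f] h by auto
  then have k: "reach k (h, f) (g, f)" using h g by (simp add: m_assoc[symmetric])
  have "f' \<noteq> - f" using sign sidx_nonzero[OF f] sidx_nonzero[OF f'] by auto
  from reach_trans[OF k reach_turn[OF g f f' this]] show ?thesis using g f f' by auto
qed

lemma reach_irreducible:
  assumes s: "s \<in> \<Omega>" and t: "t \<in> \<Omega>"
  shows "\<exists>k. reach k s t"
proof -
  obtain h f g f' where st: "s = (h, f)" "t = (g, f')"
    and h: "h \<in> carrier G" and f: "f \<in> sidx n" and g: "g \<in> carrier G" and f': "f' \<in> sidx n"
    using s t by (cases s, cases t) auto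
  show ?thesis
  proof (cases "(0 < f) = (0 < f')")
    case True
    then show ?thesis using reach_same_sign[OF h f g f'] st by simp
  next
    case False
    \<comment> \<open>one step in a direction of the sign of \<open>f'\<close> which is not \<open>- f\<close>; here \<open>n \<ge> 2\<close> is needed\<close>
    define d :: int where "d = (if f = 1 \<or> f = -1 then 2 else 1) * (if 0 < f' then 1 else -1)"
    have d: "d \<in> sidx n" "d \<noteq> - f" "(0 < d) = (0 < f')"
      unfolding d_def sidx_def using two_le_n False sidx_nonzero[OF f] by auto
    have c: "h \<otimes> gn d \<in> carrier G" using h gn_closed[OF d(1)] by simp
    obtain j where "reach j (h \<otimes> gn d, d) (g, f')" using reach_same_sign[OF c d(1) g f' d(3)] by blast
    from reach_trans[OF reach_step[OF h f d(1,2)] this] show ?thesis using c d g f' st by auto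
  qed
qed

lemma base_state: "(\<one>, 1) \<in> \<Omega>"
  using one_in_sidx by simp

sublocale walk: irreducible_reach \<Omega> reach "(\<one>, 1)"
proof
  show "\<exists>l>0. reach l (\<one>, 1) (\<one>, 1)"
    using reach_turn[of \<one> 1 1] one_in_sidx finite_carrier order_gt_0_iff_finite by auto
qed (use finite_\<Omega> base_state reach_trans reach_irreducible in auto)

lemma phase_step:
  assumes "h \<in> carrier G" "e' \<in> sidx n" "e \<in> sidx n" "e \<noteq> - e'"
  shows "[walk.phase (h, e') + 1 = walk.phase (h \<otimes> gn e, e)] (mod walk.period)"
  using walk.reach_phase_cong[OF _ _ reach_step[OF assms]] assms gn_closed[OF assms(3)] by simp

lemma phase_direction:
  assumes h: "h \<in> carrier G" and e1: "e1 \<in> sidx n" and e2: "e2 \<in> sidx n"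
  shows "[walk.phase (h, e1) = walk.phase (h, e2)] (mod walk.period)"
proof -
  have "{1, 2, -1} \<subseteq> sidx n" using two_le_n unfolding sidx_def by auto
  moreover have "\<exists>e\<in>{1, 2, -1}. e \<noteq> - e1 \<and> e \<noteq> - e2"
    by (cases "e1 = -1 \<or> e2 = -1"; cases "e1 = -2 \<or> e2 = -2") auto
  ultimately obtain e where e: "e \<in> sidx n" "e \<noteq> - e1" "e \<noteq> - e2" by blast
  have "[walk.phase (h, e1) + 1 = walk.phase (h, e2) + 1] (mod walk.period)"
    using cong_trans[OF phase_step[OF h e1 e(1,2)] cong_sym[OF phase_step[OF h e2 e(1,3)]]] .
  then show ?thesis by (simp only: cong_add_rcancel_nat)
qed

lemma period_dvd_two: "walk.period dvd 2"
proof -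
  have x1: "xg 1 \<in> carrier G" "gn 1 = xg 1" "gn (- 1) = inv (xg 1)"
    using xg_closed two_le_n by (auto simp: nbw_gen_def)
  have "[walk.phase (\<one>, 1) + 1 = walk.phase (xg 1, 1)] (mod walk.period)"
    using phase_step[OF one_closed one_in_sidx one_in_sidx] x1 by simp
  then have "[walk.phase (\<one>, 1) + 1 + 1 = walk.phase (xg 1, 1) + 1] (mod walk.period)"
    by (simp only: cong_add_rcancel_nat)
  also have "[walk.phase (xg 1, 1) + 1 = walk.phase (xg 1, - 1) + 1] (mod walk.period)"
    using phase_direction[OF x1(1) one_in_sidx minus_one_in_sidx] by (simp only: cong_add_rcancel_nat)
  also have "[walk.phase (xg 1, - 1) + 1 = walk.phase (\<one>, - 1)] (mod walk.period)"
    using phase_step[OF x1(1) minus_one_in_sidx minus_one_in_sidx] x1 by simp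
  also have "[walk.phase (\<one>, - 1) = walk.phase (\<one>, 1)] (mod walk.period)"
    using phase_direction one_in_sidx minus_one_in_sidx by blast
  finally have "[walk.phase (\<one>, 1) + 2 = walk.phase (\<one>, 1) + 0] (mod walk.period)"
    by (simp add: add.assoc)
  then show ?thesis by (simp only: cong_add_lcancel_nat cong_0_iff)
qed

lemma nbw_period_base: "nbw_period G n xg \<alpha> (\<one>, 1) = walk.period"
proof -
  have "{l. 1 \<le> l \<and> 0 < Pw l (\<one>, 1) (\<one>, 1)} = {l. 0 < l \<and> reach l (\<one>, 1) (\<one>, 1)}"
    by (auto simp: reach_def)
  then show ?thesis unfolding nbw_period_def walk.period_def by simp
qed

lemma period_one_reach:
  assumes "walk.period = 1"
  shows "\<exists>M. \<forall>s\<in>\<Omega>. \<forall>t\<in>\<Omega>. \<forall>l\<ge>M. reach l s t"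
  using walk.cong_phase_reach assms by simp

lemma period_one_aperiodic:
  assumes "walk.period = 1"
  shows "nbw_aperiodic G n xg \<alpha>"
  unfolding nbw_aperiodic_def nbw_period_def
proof
  fix s assume s: "s \<in> \<Omega>"
  obtain M where M: "\<And>l. l \<ge> M \<Longrightarrow> reach l s s" using period_one_reach[OF assms] s by blast
  let ?R = "{l. 1 \<le> l \<and> 0 < Pw l s s}"
  have "Suc M \<in> ?R" "Suc (Suc M) \<in> ?R" using M[of "Suc M"] M[of "Suc (Suc M)"] by (auto simp: reach_def)
  then have "Gcd ?R dvd Suc (Suc M) - Suc M" by (intro dvd_diff_nat Gcd_dvd)
  then show "Gcd ?R = 1" by simp
qed

definition parity :: "'a \<Rightarrow> bool" where
  "parity g \<longleftrightarrow> \<not> [walk.phase (g, 1) = walk.phase (\<one>, 1)] (mod 2)"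

lemma parity_iff_phase:
  assumes "walk.period = 2" "g \<in> carrier G" "e \<in> sidx n"
  shows "parity g \<longleftrightarrow> (even (walk.phase (g, e)) \<noteq> even (walk.phase (\<one>, 1)))"
  using phase_direction[OF assms(2,3) one_in_sidx] assms(1)
  unfolding parity_def by (simp add: cong_two_iff_even)

lemma parity_step:
  assumes two: "walk.period = 2" and h: "h \<in> carrier G" and e: "e \<in> sidx n"
  shows "parity (h \<otimes> gn e) \<longleftrightarrow> \<not> parity h"
proof -
  have "[walk.phase (h, e) + 1 = walk.phase (h \<otimes> gn e, e)] (mod 2)"
    using phase_step[OF h e e] sidx_nonzero[OF e] two by simp
  then show ?thesis
    using parity_iff_phase[OF two h e] parity_iff_phase[OF two _ e, of "h \<otimes> gn e"] h gn_closed[OF e]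
    unfolding cong_two_iff_even by simp blast
qed

lemma parity_xg: "walk.period = 2 \<Longrightarrow> i \<in> {1..n} \<Longrightarrow> parity (xg i)"
  using parity_step[OF _ one_closed sidx_of_nat, of i] gn_of_nat[of i] xg_closed[of i]
  unfolding parity_def by simp

lemma parity_hom_parity:
  assumes two: "walk.period = 2"
  shows "parity_hom G parity"
proof (rule parity_hom_generate[OF generates])
  show "xg ` {1..n} \<subseteq> carrier G" using xg_closed by auto
  show "\<not> parity \<one>" unfolding parity_def by simp
  fix h y assume h: "h \<in> carrier G" and "y \<in> xg ` {1..n}"
  then obtain i where i: "i \<in> {1..n}" "y = xg i" by auto
  then have "y = gn (int i)" "inv y = gn (- int i)" using gn_of_nat gn_minus_of_nat by auto
  then show "parity (h \<otimes> y) = (\<not> parity h) \<and> parity (h \<otimes> inv y) = (\<not> parity h)"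
    using parity_step[OF two h] sidx_of_nat[OF i(1)] sidx_uminus by simp
qed

lemma period_two_reach:
  assumes two: "walk.period = 2"
  shows "\<exists>M. \<forall>s\<in>\<Omega>. \<forall>t\<in>\<Omega>. \<forall>l\<ge>M. even l \<and> parity (fst s) = parity (fst t) \<longrightarrow> reach l s t"
proof -
  obtain M where M: "\<forall>s\<in>\<Omega>. \<forall>t\<in>\<Omega>. \<forall>l\<ge>M. [walk.phase s + l = walk.phase t] (mod 2) \<longrightarrow> reach l s t"
    using walk.cong_phase_reach unfolding two by blast
  have "reach l s t" if st: "s \<in> \<Omega>" "t \<in> \<Omega>" and l: "l \<ge> M" "even l"
    and same: "parity (fst s) = parity (fst t)" for s t l
  proof (rule M[rule_format, OF st l(1)])
    obtain g e h f where s: "s = (g, e)" "g \<in> carrier G" "e \<in> sidx n"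
      and t: "t = (h, f)" "h \<in> carrier G" "f \<in> sidx n"
      using st by (cases s, cases t) auto
    then have "parity (fst s) = parity (fst t) \<longleftrightarrow> (even (walk.phase s) \<longleftrightarrow> even (walk.phase t))"
      using parity_iff_phase[OF two s(2,3)] parity_iff_phase[OF two t(2,3)] s(1) t(1) by auto
    then show "[walk.phase s + l = walk.phase t] (mod 2)"
      using l(2) same unfolding cong_two_iff_even by simp
  qed
  then show ?thesis by blast
qed

abbreviation "init \<equiv> nbw_init G n xg \<beta>"

text \<open>\<open>law j\<close> is the distribution of \<open>X_(j+1)\<close>; as \<open>l - 1\<close> truncates, \<open>sum_law 0 = sum_law 1\<close>.\<close>
definition law :: "nat \<Rightarrow> 'a \<times> int \<Rightarrow> real" where
  "law j t = (\<Sum>s\<in>\<Omega>. init s * Pw j s t)"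

lemma sum_law_eq: "sum_law l g = (\<Sum>e\<in>sidx n. law (l - 1) (g, e))"
  unfolding nbw_sum_dist_def nbw_dist_def law_def ..

lemma law_add:
  assumes "t \<in> \<Omega>"
  shows "law (j + k) t = (\<Sum>u\<in>\<Omega>. law j u * Pw k u t)"
proof -
  have "law (j + k) t = (\<Sum>s\<in>\<Omega>. \<Sum>u\<in>\<Omega>. init s * Pw j s u * Pw k u t)"
    unfolding law_def Pw_add[OF assms] by (simp add: sum_distrib_left mult.assoc)
  also have "\<dots> = (\<Sum>u\<in>\<Omega>. law j u * Pw k u t)"
    unfolding law_def by (subst sum.swap) (simp add: sum_distrib_right)
  finally show ?thesis .
qed

lemma init_total: "(\<Sum>s\<in>\<Omega>. init s) = 1"
proof -
  have column: "(\<Sum>g\<in>carrier G. init (g, e)) = \<beta> e" if e: "e \<in> sidx n" for e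
  proof -
    have "(\<Sum>g\<in>carrier G. init (g, e)) = (\<Sum>g\<in>carrier G. if g = gn e then \<beta> e else 0)"
      by (rule sum.cong) (auto simp: nbw_init_def e)
    then show ?thesis using gn_closed[OF e] finite_carrier by simp
  qed
  have "(\<Sum>s\<in>\<Omega>. init s) = (\<Sum>g\<in>carrier G. \<Sum>e\<in>sidx n. init (g, e))"
    unfolding nbw_states_def by (simp add: sum.cartesian_product)
  also have "\<dots> = (\<Sum>e\<in>sidx n. \<Sum>g\<in>carrier G. init (g, e))" by (rule sum.swap)
  finally show ?thesis using \<beta>_sum column by simp
qed

lemma law_total: "(\<Sum>t\<in>\<Omega>. law j t) = 1"
proof -
  have "(\<Sum>t\<in>\<Omega>. law j t) = (\<Sum>s\<in>\<Omega>. init s * (\<Sum>t\<in>\<Omega>. Pw j s t))"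
    unfolding law_def by (subst sum.swap) (simp add: sum_distrib_left)
  then show ?thesis using Pw_row_sum init_total by simp
qed

lemma sum_law_total: "(\<Sum>g\<in>carrier G. sum_law l g) = 1"
  using law_total[of "l - 1"] unfolding sum_law_eq nbw_states_def by (simp add: sum.cartesian_product)

context
  fixes p :: "'a \<Rightarrow> bool"
  assumes p: "parity_hom G p" and p_xg: "\<And>i. i \<in> {1..n} \<Longrightarrow> p (xg i)"
begin

lemma parity_gn:
  assumes e: "e \<in> sidx n"
  shows "p (gn e)"
proof -
  have "nat \<bar>e\<bar> \<in> {1..n}" using e unfolding sidx_def by auto
  then have "p (xg (nat \<bar>e\<bar>))" "xg (nat \<bar>e\<bar>) \<in> carrier G" using p_xg xg_closed by auto
  then show ?thesis using parity_hom_inv[OF p] unfolding nbw_gen_def by (cases "0 < e") auto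
qed

lemma Pw_parity: "Pw l s t \<noteq> 0 \<Longrightarrow> p (fst t) = (p (fst s) \<noteq> odd l)"
proof (induction l arbitrary: t)
  case (Suc l)
  then have "(\<Sum>u\<in>\<Omega>. Pw l s u * Pt u t) \<noteq> 0" by simp
  then obtain u where "Pw l s u * Pt u t \<noteq> 0" by (rule sum.not_neutral_contains_not_neutral)
  then have u: "Pw l s u \<noteq> 0" and "Pt u t \<noteq> 0" by auto
  then have "fst u \<in> carrier G" "snd t \<in> sidx n" "fst t = fst u \<otimes> gn (snd t)"
    using Pt_nonzeroD by auto
  then have "p (fst t) = (\<not> p (fst u))"
    using p parity_gn gn_closed unfolding parity_hom_def by simp
  then show ?case using Suc.IH[OF u] by simp
qed (auto split: if_splits)

lemma sum_law_parity: "sum_law l g \<noteq> 0 \<Longrightarrow> p g = even (l - 1)"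
proof -
  assume "sum_law l g \<noteq> 0"
  then obtain e s where "init s \<noteq> 0" "Pw (l - 1) s (g, e) \<noteq> 0"
    unfolding sum_law_eq law_def by (auto elim!: sum.not_neutral_contains_not_neutral)
  moreover have "p (fst s)" if "init s \<noteq> 0"
    using that parity_gn unfolding nbw_init_def by (auto split: if_splits)
  ultimately show "p g = even (l - 1)" using Pw_parity by fastforce
qed

end

definition shift :: "'a \<Rightarrow> 'a \<times> int \<Rightarrow> 'a \<times> int" where
  "shift a u = (a \<otimes> fst u, snd u)"

lemma shift_in_\<Omega>: "a \<in> carrier G \<Longrightarrow> u \<in> \<Omega> \<Longrightarrow> shift a u \<in> \<Omega>"
  unfolding shift_def by (cases u) auto

lemma shift_inv_shift: "a \<in> carrier G \<Longrightarrow> u \<in> \<Omega> \<Longrightarrow> shift (inv a) (shift a u) = u"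
  unfolding shift_def by (cases u) (auto simp: m_assoc[symmetric])

lemma shift_shift_inv: "a \<in> carrier G \<Longrightarrow> u \<in> \<Omega> \<Longrightarrow> shift a (shift (inv a) u) = u"
  unfolding shift_def by (cases u) (auto simp: m_assoc[symmetric])

lemma sum_shift: "a \<in> carrier G \<Longrightarrow> (\<Sum>u\<in>\<Omega>. F (shift a u)) = (\<Sum>u\<in>\<Omega>. F u)"
  by (rule sum.reindex_bij_witness[where i = "shift (inv a)" and j = "shift a"])
    (auto simp: shift_in_\<Omega> shift_inv_shift shift_shift_inv)

lemma Pt_shift:
  assumes a: "a \<in> carrier G" and s: "s \<in> \<Omega>" and t: "t \<in> \<Omega>"
  shows "Pt (shift a s) (shift a t) = Pt s t"
proof -
  have "(a \<otimes> fst t = a \<otimes> fst s \<otimes> gn (snd t)) \<longleftrightarrow> (fst t = fst s \<otimes> gn (snd t))"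
    using a s t gn_closed[of "snd t"] by (cases s, cases t) (auto simp: m_assoc)
  then show ?thesis using a s unfolding nbw_trans_def shift_def by (cases s) auto
qed

lemma Pw_shift:
  assumes a: "a \<in> carrier G" and s: "s \<in> \<Omega>"
  shows "t \<in> \<Omega> \<Longrightarrow> Pw l (shift a s) (shift a t) = Pw l s t"
proof (induction l arbitrary: t)
  case 0
  then show ?case using shift_inv_shift[OF a] s by (metis nbw_trans_pow.simps(1))
next
  case (Suc l)
  have "Pw (Suc l) (shift a s) (shift a t) = (\<Sum>u\<in>\<Omega>. Pw l (shift a s) (shift a u) * Pt (shift a u) (shift a t))"
    using sum_shift[OF a, of "\<lambda>u. Pw l (shift a s) u * Pt u (shift a t)"] by simp
  also have "\<dots> = Pw (Suc l) s t"
    using Suc a s by (auto intro!: sum.cong simp: Pt_shift)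
  finally show ?case .
qed

definition law_diff :: "'a \<Rightarrow> nat \<Rightarrow> 'a \<times> int \<Rightarrow> real" where
  "law_diff a j t = law j t - law j (shift (inv a) t)"

lemma law_diff_add:
  assumes a: "a \<in> carrier G" and t: "t \<in> \<Omega>"
  shows "law_diff a (j + k) t = (\<Sum>u\<in>\<Omega>. law_diff a j u * Pw k u t)"
proof -
  have ia: "inv a \<in> carrier G" using a by simp
  have "law (j + k) (shift (inv a) t) = (\<Sum>u\<in>\<Omega>. law j u * Pw k u (shift (inv a) t))"
    using law_add shift_in_\<Omega>[OF ia t] by blast
  also have "\<dots> = (\<Sum>u\<in>\<Omega>. law j (shift (inv a) u) * Pw k (shift (inv a) u) (shift (inv a) t))"
    by (rule sum_shift[OF ia, symmetric])
  also have "\<dots> = (\<Sum>u\<in>\<Omega>. law j (shift (inv a) u) * Pw k u t)"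
    using Pw_shift[OF ia _ t] by (auto intro: sum.cong)
  finally show ?thesis
    unfolding law_diff_def using law_add[OF t] by (simp add: left_diff_distrib sum_subtractf)
qed

lemma law_diff_class_sum:
  assumes q: "parity_hom G q" and a: "a \<in> carrier G" "\<not> q a"
  shows "(\<Sum>s\<in>{s\<in>\<Omega>. q (fst s) = C}. law_diff a j s) = 0"
proof -
  have q_shift: "q (fst (shift a u)) = q (fst u)" if "u \<in> \<Omega>" for u
    using q a that unfolding parity_hom_def shift_def by (cases u) auto
  have "(\<Sum>s\<in>\<Omega>. if q (fst s) = C then law j (shift (inv a) s) else 0)
      = (\<Sum>u\<in>\<Omega>. if q (fst (shift a u)) = C then law j (shift (inv a) (shift a u)) else 0)"
    by (rule sum_shift[OF a(1), symmetric])
  also have "\<dots> = (\<Sum>u\<in>\<Omega>. if q (fst u) = C then law j u else 0)"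
    using q_shift shift_inv_shift[OF a(1)] by (auto intro: sum.cong)
  finally show ?thesis
    unfolding law_diff_def by (simp add: sum_subtractf sum.inter_filter[OF finite_\<Omega>])
qed

definition law_dist :: "'a \<Rightarrow> nat \<Rightarrow> real" where
  "law_dist a j = (\<Sum>t\<in>\<Omega>. \<bar>law_diff a j t\<bar>)"

lemma law_dist_contract:
  assumes q: "parity_hom G q" and a: "a \<in> carrier G" "\<not> q a" and \<delta>: "0 \<le> \<delta>"
    and lower: "\<And>s t. s \<in> \<Omega> \<Longrightarrow> t \<in> \<Omega> \<Longrightarrow> q (fst s) = q (fst t) \<Longrightarrow> \<delta> \<le> Pw m s t"
  shows "law_dist a (j + m) \<le> (1 - \<delta>) * law_dist a j"
proof -
  have "law_dist a (j + m) = (\<Sum>t\<in>\<Omega>. \<bar>\<Sum>s\<in>\<Omega>. law_diff a j s * Pw m s t\<bar>)"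
    unfolding law_dist_def by (rule sum.cong) (auto simp: law_diff_add[OF a(1)])
  also have "\<dots> \<le> (1 - \<delta>) * law_dist a j"
    unfolding law_dist_def
    by (rule class_doeblin_contraction[where c = "\<lambda>s. q (fst s)"])
      (use finite_\<Omega> Pw_nonneg Pw_row_sum lower \<delta> law_diff_class_sum[OF q a] in auto)
  finally show ?thesis .
qed

lemma law_dist_tendsto_zero:
  assumes q: "parity_hom G q" and a: "a \<in> carrier G" "\<not> q a"
    and reach_m: "\<And>s t. s \<in> \<Omega> \<Longrightarrow> t \<in> \<Omega> \<Longrightarrow> q (fst s) = q (fst t) \<Longrightarrow> reach m s t"
  shows "law_dist a \<longlonglongrightarrow> 0"
proof -
  define P where "P = (\<lambda>(s, t). Pw m s t) ` {(s, t) \<in> \<Omega> \<times> \<Omega>. q (fst s) = q (fst t)}"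
  define \<delta> where "\<delta> = Min P"
  have "finite P"
    unfolding P_def by (rule finite_imageI, rule finite_subset[of _ "\<Omega> \<times> \<Omega>"]) (auto simp: finite_\<Omega>)
  moreover have "P \<noteq> {}" unfolding P_def using base_state by (auto simp: image_iff)
  moreover have "\<forall>x\<in>P. 0 < x" unfolding P_def using reach_m by (auto simp: reach_def)
  ultimately have "0 < \<delta>" unfolding \<delta>_def by simp
  have lower: "\<delta> \<le> Pw m s t" if "s \<in> \<Omega>" "t \<in> \<Omega>" "q (fst s) = q (fst t)" for s t
    unfolding \<delta>_def using \<open>finite P\<close> that by (intro Min_le) (auto simp: P_def)
  show ?thesis
  proof (rule contracting_tendsto_zero)
    show "0 \<le> law_dist a j" for j unfolding law_dist_def by (simp add: sum_nonneg)
    show "law_dist a (Suc j) \<le> law_dist a j" for j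
    proof -
      have "law_dist a (j + 1) \<le> (1 - 0) * law_dist a j"
        by (rule law_dist_contract[OF q a order_refl Pw_nonneg])
      then show ?thesis by simp
    qed
    show "law_dist a (j + m) \<le> (1 - \<delta>) * law_dist a j" for j
      by (rule law_dist_contract[OF q a _ lower]) (use \<open>0 < \<delta>\<close> in simp_all)
    show "1 - \<delta> < 1" using \<open>0 < \<delta>\<close> by simp
  qed
qed

lemma sum_law_diff_tendsto_zero:
  assumes q: "parity_hom G q"
    and reach_m: "\<And>s t. s \<in> \<Omega> \<Longrightarrow> t \<in> \<Omega> \<Longrightarrow> q (fst s) = q (fst t) \<Longrightarrow> reach m s t"
    and g: "g \<in> carrier G" and h: "h \<in> carrier G" and same: "q g = q h"
  shows "(\<lambda>l. sum_law l g - sum_law l h) \<longlonglongrightarrow> 0"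
proof -
  define a where "a = g \<otimes> inv h"
  have a: "a \<in> carrier G" using g h unfolding a_def by simp
  have "q a = (q g \<noteq> q (inv h))" using q g h unfolding a_def parity_hom_def by simp
  then have "\<not> q a" using same parity_hom_inv[OF q h] by simp
  have shift_g: "shift (inv a) (g, e) = (h, e)" for e
  proof -
    have "inv a \<otimes> g = h \<otimes> (inv g \<otimes> g)"
      using g h unfolding a_def by (simp add: inv_mult_group m_assoc)
    then show ?thesis using g h unfolding shift_def by simp
  qed
  have "law_dist a \<longlonglongrightarrow> 0" by (rule law_dist_tendsto_zero[OF q a \<open>\<not> q a\<close> reach_m])
  then have dist: "(\<lambda>l. law_dist a (l - 1)) \<longlonglongrightarrow> 0"
    using LIMSEQ_imp_Suc[where f = "\<lambda>l. law_dist a (l - 1)"] by simp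
  have bound: "\<bar>sum_law l g - sum_law l h\<bar> \<le> law_dist a (l - 1)" for l
  proof -
    have "\<bar>sum_law l g - sum_law l h\<bar> = \<bar>\<Sum>e\<in>sidx n. law_diff a (l - 1) (g, e)\<bar>"
      unfolding sum_law_eq law_diff_def shift_g by (simp add: sum_subtractf)
    also have "\<dots> \<le> (\<Sum>t\<in>Pair g ` sidx n. \<bar>law_diff a (l - 1) t\<bar>)"
      by (simp add: sum.reindex inj_on_def sum_abs)
    also have "\<dots> \<le> law_dist a (l - 1)"
      unfolding law_dist_def using g finite_\<Omega> by (intro sum_mono2) auto
    finally show ?thesis .
  qed
  have "\<bar>sum_law l g - sum_law l h\<bar> \<le> \<bar>law_dist a (l - 1)\<bar> * 1" for l
    using bound[of l] by simp
  then show ?thesis by (intro tendsto_0_le[OF dist, of _ 1] always_eventually) simp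
qed

lemma limit_period_one:
  assumes one: "walk.period = 1" and g: "g \<in> carrier G"
  shows "(\<lambda>l. sum_law l g) \<longlonglongrightarrow> 1 / real (card (carrier G))"
proof -
  obtain M where M: "\<forall>s\<in>\<Omega>. \<forall>t\<in>\<Omega>. \<forall>l\<ge>M. reach l s t" using period_one_reach[OF one] by blast
  have trivial: "parity_hom G (\<lambda>_. False)" unfolding parity_hom_def by simp
  have "(\<lambda>l. sum_law l g) \<longlonglongrightarrow> (if g \<in> carrier G then 1 / real (card (carrier G)) else 0)"
  proof (rule tendsto_uniform_on_support[OF finite_carrier order_refl _ sum_law_total _ _ g])
    show "carrier G \<noteq> {}" by auto
    show "\<forall>\<^sub>F l in sequentially. \<forall>h\<in>carrier G - carrier G. sum_law l h = 0" by simp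
    show "(\<lambda>l. sum_law l g - sum_law l h) \<longlonglongrightarrow> 0" if "g \<in> carrier G" "h \<in> carrier G" for g h
      by (rule sum_law_diff_tendsto_zero[OF trivial _ that]) (use M in auto)
  qed
  then show ?thesis using g by simp
qed

lemma limits_period_two:
  assumes two: "walk.period = 2" and g: "g \<in> carrier G"
  defines "H \<equiv> {g \<in> carrier G. \<not> parity g}"
  shows "(\<lambda>l. sum_law (2 * l) g) \<longlonglongrightarrow> (if g \<in> H then 1 / real (card H) else 0)"
    and "(\<lambda>l. sum_law (2 * l + 1) g)
           \<longlonglongrightarrow> (if g \<in> carrier G - H then 1 / real (card (carrier G - H)) else 0)"
proof -
  note hom = parity_hom_parity[OF two]
  note parity_sum_law = sum_law_parity[OF hom parity_xg[OF two]]
  obtain M where M: "\<forall>s\<in>\<Omega>. \<forall>t\<in>\<Omega>. \<forall>l\<ge>M. even l \<and> parity (fst s) = parity (fst t) \<longrightarrow> reach l s t"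
    using period_two_reach[OF two] by blast
  have diff: "(\<lambda>l. sum_law (f l) g - sum_law (f l) h) \<longlonglongrightarrow> 0"
    if "strict_mono f" "g \<in> carrier G" "h \<in> carrier G" "parity g = parity h" for f g h
  proof -
    have "(\<lambda>l. sum_law l g - sum_law l h) \<longlonglongrightarrow> 0"
      by (rule sum_law_diff_tendsto_zero[OF hom _ that(2-4), of "2 * M"]) (use M in auto)
    from LIMSEQ_subseq_LIMSEQ[OF this \<open>strict_mono f\<close>] show ?thesis by (simp add: comp_def)
  qed
  have H: "H \<subseteq> carrier G" "\<one> \<in> H" using parity_hom_one[OF hom] unfolding H_def by auto
  have coH: "xg 1 \<in> carrier G - H" using parity_xg[OF two] xg_closed two_le_n unfolding H_def by auto
  show "(\<lambda>l. sum_law (2 * l) g) \<longlonglongrightarrow> (if g \<in> H then 1 / real (card H) else 0)"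
  proof (rule tendsto_uniform_on_support[OF finite_carrier H(1) _ sum_law_total _ _ g])
    show "H \<noteq> {}" using H(2) by blast
    have "\<forall>h\<in>carrier G - H. sum_law (2 * l) h = 0" if "l \<ge> 1" for l
      using that parity_sum_law[of "2 * l"] unfolding H_def by fastforce
    then show "\<forall>\<^sub>F l in sequentially. \<forall>h\<in>carrier G - H. sum_law (2 * l) h = 0"
      by (auto simp: eventually_sequentially)
    show "(\<lambda>l. sum_law (2 * l) g - sum_law (2 * l) h) \<longlonglongrightarrow> 0" if "g \<in> H" "h \<in> H" for g h
      using that diff[of "\<lambda>l. 2 * l"] unfolding H_def by (auto simp: strict_mono_def)
  qed
  show "(\<lambda>l. sum_law (2 * l + 1) g)
          \<longlonglongrightarrow> (if g \<in> carrier G - H then 1 / real (card (carrier G - H)) else 0)"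
  proof (rule tendsto_uniform_on_support[OF finite_carrier Diff_subset _ sum_law_total _ _ g])
    show "carrier G - H \<noteq> {}" using coH by blast
    have "\<forall>h\<in>carrier G - (carrier G - H). sum_law (2 * l + 1) h = 0" for l
      using parity_sum_law[of "2 * l + 1"] unfolding H_def by fastforce
    then show "\<forall>\<^sub>F l in sequentially. \<forall>h\<in>carrier G - (carrier G - H). sum_law (2 * l + 1) h = 0"
      by simp
    show "(\<lambda>l. sum_law (2 * l + 1) g - sum_law (2 * l + 1) h) \<longlonglongrightarrow> 0"
      if "g \<in> carrier G - H" "h \<in> carrier G - H" for g h
      using that diff[of "\<lambda>l. 2 * l + 1"] unfolding H_def by (auto simp: strict_mono_def)
  qed
qed

end

theorem mainTheorem6:
  fixes G :: "('a, 'b) monoid_scheme" and n :: nat and x :: "nat \<Rightarrow> 'a"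
    and \<alpha> :: "int \<Rightarrow> int \<Rightarrow> real" and \<beta> :: "int \<Rightarrow> real"
  assumes grp: "group G" and fin: "finite (carrier G)"
    and n2: "n \<ge> 2"
    and xG: "\<And>i. i \<in> {1..n} \<Longrightarrow> x i \<in> carrier G"
    and gen: "generate G (x ` {1..n}) = carrier G"
    and \<alpha>_pos: "\<And>e' e. e' \<in> sidx n \<Longrightarrow> e \<in> sidx n \<Longrightarrow> e \<noteq> - e' \<Longrightarrow> \<alpha> e' e > 0"
    and \<alpha>_sum: "\<And>e'. e' \<in> sidx n \<Longrightarrow> (\<Sum>e\<in>sidx n - {- e'}. \<alpha> e' e) = 1"
    and \<beta>_pos: "\<And>e. e \<in> sidx n \<Longrightarrow> \<beta> e > 0"
    and \<beta>_sum: "(\<Sum>e\<in>sidx n. \<beta> e) = 1"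
  shows "(nbw_aperiodic G n x \<alpha> \<longrightarrow>
            (\<forall>g\<in>carrier G. (\<lambda>l. nbw_sum_dist G n x \<alpha> \<beta> l g)
                \<longlonglongrightarrow> 1 / real (card (carrier G))))
       \<and> (\<not> nbw_aperiodic G n x \<alpha> \<longrightarrow>
            (\<exists>H. subgroup H G \<and> card (rcosets\<^bsub>G\<^esub> H) = 2
               \<and> (\<forall>i\<in>{1..n}. x i \<notin> H)
               \<and> (\<forall>g\<in>carrier G. (\<lambda>l. nbw_sum_dist G n x \<alpha> \<beta> (2 * l) g)
                     \<longlonglongrightarrow> (if g \<in> H then 1 / real (card H) else 0))
               \<and> (\<forall>g\<in>carrier G. (\<lambda>l. nbw_sum_dist G n x \<alpha> \<beta> (2 * l + 1) g)
                     \<longlonglongrightarrow> (if g \<in> carrier G - H then 1 / real (card (carrier G - H)) else 0))))"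
proof -
  interpret nonbacktracking_walk G n x \<alpha> \<beta>
    by (rule nonbacktracking_walk.intro[OF grp]) (unfold_locales, use assms in auto)
  have "walk.period \<le> 2" using period_dvd_two by (rule dvd_imp_le) simp
  then have "walk.period = 1 \<or> walk.period = 2" using walk.period_pos by linarith
  then show ?thesis
  proof
    assume "walk.period = 1"
    then show ?thesis using period_one_aperiodic limit_period_one by blast
  next
    assume two: "walk.period = 2"
    define H where "H = {g \<in> carrier G. \<not> parity g}"
    have "nbw_period G n x \<alpha> (\<one>\<^bsub>G\<^esub>, 1) \<noteq> 1" using nbw_period_base two by simp
    then have "\<not> nbw_aperiodic G n x \<alpha>" using base_state unfolding nbw_aperiodic_def by blast
    moreover have "subgroup H G" "card (rcosets\<^bsub>G\<^esub> H) = 2"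
      using parity_hom_kernel_subgroup parity_hom_kernel_index_two[of _ "x 1"]
        parity_hom_parity[OF two] parity_xg[OF two] xG two_le_n unfolding H_def by auto
    moreover have "\<forall>i\<in>{1..n}. x i \<notin> H" using parity_xg[OF two] unfolding H_def by auto
    moreover have "\<forall>g\<in>carrier G. (\<lambda>l. sum_law (2 * l) g) \<longlonglongrightarrow> (if g \<in> H then 1 / real (card H) else 0)"
      using limits_period_two(1)[OF two] unfolding H_def by blast
    moreover have "\<forall>g\<in>carrier G. (\<lambda>l. sum_law (2 * l + 1) g)
        \<longlonglongrightarrow> (if g \<in> carrier G - H then 1 / real (card (carrier G - H)) else 0)"
      using limits_period_two(2)[OF two] unfolding H_def by blast
    ultimately show ?thesis by blast
  qed
qed

end
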